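(* Let $G$ be a very well-covered graph and let $M$ be a perfect matching of $G$. Then no edge $xy\in M$ lies on a triangle of $G$, and no edge $xy\in M$ lies on an induced (chordless) cycle of $G$ of length $q\geq 5$. Equivalently: for every $q=3$ or $q\geq5$, no edge of an induced subgraph of $G$ isomorphic to the chordless cycle $C_q$ belongs to a perfect matching of $G$.
   Context: All graphs are finite, simple, undirected. A stable set is a set of pairwise non-adjacent vertices; $\alpha(G)$ is the maximum size of a stable set. $G$ is well-covered if all its maximal stable sets have the same cardinality, and $G$ is very well-covered if it is well-covered, has no isolated vertices, and $|V(G)|=2\alpha(G)$. $C_n$ denotes the chordless cycle on $n\ge 3$ vertices. *)

theory Defs
  imports Main
begin

definition graph :: "'a set \<Rightarrow> 'a set set \<Rightarrow> bool" where
  "graph V E \<longleftrightarrow> finite V \<and> (\<forall>e\<in>E. e \<subseteq> V \<and> card e = 2)"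

definition adj :: "'a set set \<Rightarrow> 'a \<Rightarrow> 'a \<Rightarrow> bool" where
  "adj E x y \<longleftrightarrow> {x, y} \<in> E"

definition stable_set :: "'a set \<Rightarrow> 'a set set \<Rightarrow> 'a set \<Rightarrow> bool" where
  "stable_set V E S \<longleftrightarrow> S \<subseteq> V \<and> (\<forall>x\<in>S. \<forall>y\<in>S. \<not> adj E x y)"

definition maximal_stable_set :: "'a set \<Rightarrow> 'a set set \<Rightarrow> 'a set \<Rightarrow> bool" where
  "maximal_stable_set V E S \<longleftrightarrow> stable_set V E S \<and>
     (\<forall>T. stable_set V E T \<and> S \<subseteq> T \<longrightarrow> T = S)"

definition alpha :: "'a set \<Rightarrow> 'a set set \<Rightarrow> nat" where
  "alpha V E = Max (card ` {S. stable_set V E S})"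

definition well_covered :: "'a set \<Rightarrow> 'a set set \<Rightarrow> bool" where
  "well_covered V E \<longleftrightarrow>
     (\<forall>S T. maximal_stable_set V E S \<and> maximal_stable_set V E T \<longrightarrow> card S = card T)"

definition very_well_covered :: "'a set \<Rightarrow> 'a set set \<Rightarrow> bool" where
  "very_well_covered V E \<longleftrightarrow> well_covered V E \<and>
     (\<forall>v\<in>V. \<exists>u. adj E v u) \<and> card V = 2 * alpha V E"

definition perfect_matching :: "'a set \<Rightarrow> 'a set set \<Rightarrow> 'a set set \<Rightarrow> bool" where
  "perfect_matching V E M \<longleftrightarrow> M \<subseteq> E \<and>
     (\<forall>e\<in>M. \<forall>f\<in>M. e \<noteq> f \<longrightarrow> e \<inter> f = {}) \<and> \<Union>M = V"

definition induced_cycle :: "'a set \<Rightarrow> 'a set set \<Rightarrow> 'a list \<Rightarrow> bool" where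
  "induced_cycle V E c \<longleftrightarrow> length c \<ge> 3 \<and> distinct c \<and> set c \<subseteq> V \<and>
     (\<forall>i<length c. \<forall>j<length c.
        adj E (c ! i) (c ! j) \<longleftrightarrow> (j = (i + 1) mod length c \<or> i = (j + 1) mod length c))"

end

theory Submission
  imports Defs
begin

(* Let G be very well-covered with a perfect matching M.  Then
   2 * card M = card V = 2 * alpha, so every maximal stable set S has exactly
   card M vertices.  A stable set meets each matching edge in at most one vertex,
   so S must meet every edge of M.  Consequently, for a matching edge xy there
   are no vertices a ~ x and b ~ y with a, b non-adjacent (a = b allowed): a
   maximal stable set containing {a, b} would avoid both x and y.
   On an induced cycle c of length q, take xy = c_i c_(i+1), a = c_(i-1) and
   b = c_(i+2).  For q = 3 these coincide (and there are no loops), for q >= 5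
   they are non-adjacent; only q = 4 makes them adjacent. *)

lemma adj_sym: "adj E x y = adj E y x"
  unfolding adj_def by (simp add: insert_commute)

lemma adj_irrefl: "graph V E \<Longrightarrow> \<not> adj E a a"
  unfolding graph_def adj_def by force

lemma adj_in_vertices: "graph V E \<Longrightarrow> adj E a b \<Longrightarrow> a \<in> V"
  unfolding graph_def adj_def by blast

lemma finite_stable_sets: "graph V E \<Longrightarrow> finite {S. stable_set V E S}"
  unfolding graph_def stable_set_def by (rule finite_subset[of _ "Pow V"]) auto

(* Every stable set is contained in a maximal one: take an inclusion-maximal
   element among the finitely many stable supersets. *)
lemma stable_set_extends_to_maximal:
  assumes g: "graph V E" and S: "stable_set V E S"
  shows "\<exists>T. S \<subseteq> T \<and> maximal_stable_set V E T"
proof -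
  let ?F = "{T. stable_set V E T \<and> S \<subseteq> T}"
  have "finite ?F"
    using finite_stable_sets[OF g] by (rule finite_subset[rotated]) auto
  moreover have "?F \<noteq> {}" using S by auto
  ultimately obtain T where T: "T \<in> ?F" and max: "\<And>U. U \<in> ?F \<Longrightarrow> T \<subseteq> U \<Longrightarrow> T = U"
    using finite_has_maximal by metis
  have "maximal_stable_set V E T"
    unfolding maximal_stable_set_def using T max by blast
  with T show ?thesis by blast
qed

lemma maximal_stable_card_alpha:
  assumes g: "graph V E" and wc: "well_covered V E" and S: "maximal_stable_set V E S"
  shows "card S = alpha V E"
proof -
  have fin: "finite (card ` {S. stable_set V E S})"
    using finite_stable_sets[OF g] by simp
  have "{} \<in> {S. stable_set V E S}" unfolding stable_set_def by simp
  then have "alpha V E \<in> card ` {S. stable_set V E S}"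
    unfolding alpha_def using fin by (intro Max_in) auto
  then obtain T where T: "stable_set V E T" "card T = alpha V E" by auto
  have "maximal_stable_set V E T"
    unfolding maximal_stable_set_def
  proof (intro conjI allI impI)
    show "stable_set V E T" by fact
    fix U assume U: "stable_set V E U \<and> T \<subseteq> U"
    have "card U \<le> card T" unfolding T(2) alpha_def using fin U by auto
    moreover have "finite U"
      using U g unfolding stable_set_def graph_def by (auto intro: finite_subset)
    ultimately show "U = T" using U card_seteq by metis
  qed
  then show ?thesis using wc S T(2) unfolding well_covered_def by metis
qed

lemma perfect_matching_card:
  assumes g: "graph V E" and pm: "perfect_matching V E M"
  shows "finite M" and "card V = 2 * card M"
proof -
  have fV: "finite V" using g graph_def by auto
  have MV: "M \<subseteq> Pow V" using pm unfolding perfect_matching_def by auto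
  show fM: "finite M" using MV fV by (meson finite_Pow_iff finite_subset)
  have two: "\<forall>e\<in>M. card e = 2"
    using pm g unfolding perfect_matching_def graph_def by auto
  have "card (\<Union>M) = (\<Sum>e\<in>M. card e)"
    using fM MV fV pm unfolding perfect_matching_def
    by (intro card_Union_disjoint) (auto simp: pairwise_def disjnt_def intro: finite_subset)
  also have "\<dots> = 2 * card M" using two by simp
  finally show "card V = 2 * card M" using pm unfolding perfect_matching_def by simp
qed

lemma stable_meets_edge_at_most_once:
  assumes g: "graph V E" and S: "stable_set V E S" and e: "e \<in> E"
  shows "card (S \<inter> e) \<le> 1"
proof -
  obtain u v where uv: "e = {u, v}" "u \<noteq> v"
    using g e unfolding graph_def by (meson card_2_iff)
  have "\<not> (u \<in> S \<and> v \<in> S)" using S e uv unfolding stable_set_def adj_def by auto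
  then have "\<forall>x\<in>S \<inter> e. \<forall>y\<in>S \<inter> e. x = y" using uv by auto
  moreover have "finite (S \<inter> e)" using uv by simp
  ultimately show ?thesis using card_le_Suc0_iff_eq by fastforce
qed

lemma stable_card_le_met_edges:
  assumes g: "graph V E" and pm: "perfect_matching V E M" and S: "stable_set V E S"
  shows "card S \<le> card {e \<in> M. S \<inter> e \<noteq> {}}"
proof -
  let ?M' = "{e \<in> M. S \<inter> e \<noteq> {}}"
  have fM': "finite ?M'" using perfect_matching_card(1)[OF g pm] by simp
  have "S \<subseteq> \<Union>M"
    using S pm unfolding stable_set_def perfect_matching_def by simp
  then have cover: "(\<Union>e\<in>?M'. S \<inter> e) = S" by blast
  have "card S \<le> (\<Sum>e\<in>?M'. card (S \<inter> e))"
    using card_UN_le[OF fM', of "\<lambda>e. S \<inter> e"] by (simp only: cover)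
  also have "\<dots> \<le> (\<Sum>e\<in>?M'. 1)"
  proof (rule sum_mono)
    fix e assume "e \<in> ?M'"
    then have "e \<in> E" using pm unfolding perfect_matching_def by blast
    then show "card (S \<inter> e) \<le> 1" by (rule stable_meets_edge_at_most_once[OF g S])
  qed
  finally show ?thesis by simp
qed

(* In a very well-covered graph, maximal stable sets meet every matching edge,
   since they have exactly card M vertices. *)
lemma maximal_stable_meets_matching_edge:
  assumes g: "graph V E" and vwc: "very_well_covered V E" and pm: "perfect_matching V E M"
    and S: "maximal_stable_set V E S" and e: "e \<in> M"
  shows "S \<inter> e \<noteq> {}"
proof
  assume miss: "S \<inter> e = {}"
  have fM: "finite M" and cardV: "card V = 2 * card M"
    using perfect_matching_card[OF g pm] by auto
  have wc: "well_covered V E" and alpha: "card V = 2 * alpha V E"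
    using vwc unfolding very_well_covered_def by auto
  have "card S = card M"
    using maximal_stable_card_alpha[OF g wc S] alpha cardV by simp
  also have "\<dots> > card {f \<in> M. S \<inter> f \<noteq> {}}"
    using fM e miss by (intro psubset_card_mono) auto
  also have "card {f \<in> M. S \<inter> f \<noteq> {}} \<ge> card S"
    using S unfolding maximal_stable_set_def by (intro stable_card_le_met_edges[OF g pm]) simp
  finally show False by simp
qed

lemma matching_edge_no_nonadjacent_neighbours:
  assumes g: "graph V E" and vwc: "very_well_covered V E" and pm: "perfect_matching V E M"
    and xy: "{x, y} \<in> M" and a_adj_x: "adj E a x" and b_adj_y: "adj E b y" and ab: "\<not> adj E a b"
  shows False
proof -
  have "stable_set V E {a, b}"
    unfolding stable_set_def
  proof (intro conjI ballI)
    show "{a, b} \<subseteq> V" using adj_in_vertices[OF g a_adj_x] adj_in_vertices[OF g b_adj_y] by simp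
    fix u v assume "u \<in> {a, b}" "v \<in> {a, b}"
    then show "\<not> adj E u v" using ab adj_irrefl[OF g] adj_sym[of E a b] by auto
  qed
  then obtain S where S: "{a, b} \<subseteq> S" "maximal_stable_set V E S"
    using stable_set_extends_to_maximal[OF g] by blast
  then have nonadj: "\<not> adj E u v" if "u \<in> S" "v \<in> S" for u v
    using that unfolding maximal_stable_set_def stable_set_def by blast
  have "x \<in> S \<or> y \<in> S"
    using maximal_stable_meets_matching_edge[OF g vwc pm S(2) xy] by blast
  then show False using nonadj S(1) a_adj_x b_adj_y by blast
qed

lemma mod_add_left_cancel_less:
  fixes n :: nat
  assumes "b < n" "d < n" "(i + b) mod n = (i + d) mod n"
  shows "b = d"
proof -
  have "b = d" if "b \<le> d" "d < n" "(i + b) mod n = (i + d) mod n" for b d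
  proof -
    have "n dvd (i + d) - (i + b)"
      using that mod_eq_dvd_iff_nat[of "i + b" "i + d" n] by simp
    then have "n dvd d - b" by simp
    then show "b = d"
      using that by (metis diff_is_0_eq' diff_le_self dvd_imp_le le_antisym le_less_trans
          not_less zero_less_diff)
  qed
  from this[of b d] this[of d b] assms show ?thesis by (metis nat_le_linear)
qed

lemma induced_cycle_adj_offsets:
  assumes cyc: "induced_cycle V E c" and a: "a < length c" and b: "b < length c"
  shows "adj E (c ! ((i + a) mod length c)) (c ! ((i + b) mod length c)) \<longleftrightarrow>
           (b = (a + 1) mod length c \<or> a = (b + 1) mod length c)"
proof -
  let ?n = "length c"
  have n: "?n > 0" using cyc unfolding induced_cycle_def by auto
  have successor: "(i + b') mod ?n = ((i + a') mod ?n + 1) mod ?n \<longleftrightarrow> b' = (a' + 1) mod ?n"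
    if "b' < ?n" for a' b'
  proof -
    have "((i + a') mod ?n + 1) mod ?n = (i + (a' + 1) mod ?n) mod ?n"
      by (simp add: mod_Suc_eq mod_add_right_eq)
    then show ?thesis
      using mod_add_left_cancel_less[OF that, of "(a' + 1) mod ?n" i] n by auto
  qed
  have "\<forall>j<?n. \<forall>k<?n. adj E (c ! j) (c ! k) \<longleftrightarrow> (k = (j + 1) mod ?n \<or> j = (k + 1) mod ?n)"
    using cyc unfolding induced_cycle_def by blast
  then show ?thesis
    using n successor[OF b, of a] successor[OF a, of b] by simp
qed

(* With x = c_i and y = c_(i+1), the vertices a = c_(i-1) ~ x and b = c_(i+2) ~ y
   are non-adjacent unless the cycle has length 4 (for length 3 they coincide). *)
theorem lemma1:
  fixes V :: "'a set" and E M :: "'a set set" and c :: "'a list"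
  assumes "graph V E"
    and "very_well_covered V E"
    and "perfect_matching V E M"
    and "induced_cycle V E c"
    and "length c = 3 \<or> length c \<ge> 5"
    and "i < length c"
  shows "{c ! i, c ! ((i + 1) mod length c)} \<notin> M"
proof
  assume xy: "{c ! i, c ! ((i + 1) mod length c)} \<in> M"
  let ?n = "length c"
  have n: "?n \<ge> 3" and "c \<noteq> []" using assms(4) unfolding induced_cycle_def by auto
  note offsets = induced_cycle_adj_offsets[OF assms(4), where i = i]
  have "adj E (c ! ((i + (?n - 1)) mod ?n)) (c ! i)"
    using offsets[of "?n - 1" 0] n assms(6) \<open>c \<noteq> []\<close> by simp
  moreover have "adj E (c ! ((i + 2) mod ?n)) (c ! ((i + 1) mod ?n))"
    using offsets[of 2 1] n by simp
  moreover have "\<not> adj E (c ! ((i + (?n - 1)) mod ?n)) (c ! ((i + 2) mod ?n))"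
  proof -
    have "?n - 1 + 1 = ?n" using n by simp
    then have "(?n - 1 + 1) mod ?n = 0" by simp
    moreover have "(2 + 1) mod ?n \<noteq> ?n - 1"
      using assms(5) by (cases "?n = 3") simp_all
    ultimately show ?thesis using offsets[of "?n - 1" 2] n by simp
  qed
  ultimately show False
    by (rule matching_edge_no_nonadjacent_neighbours[OF assms(1-3) xy])
qed

end
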